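(* Let $g$ be a $1$-Lipschitz function on $\mathbb R$ supported on $[0,1]$, $N$ a positive integer, $L>0$, $\alpha\in(0,1]$ and $M>0$. For $\varepsilon=(\varepsilon_1,\ldots,\varepsilon_{2^N})\in\{-1,1\}^{2^N}$ define $G_\varepsilon(x)=L\sum_{k=0}^{2^N-1}\varepsilon_{k+1}\,g(2^Nx-k)$ for $x\in[0,1]$. If $L\le2^{-[(N-1)\alpha+1]}M$, then for every $\varepsilon\in\{-1,1\}^{2^N}$, $|G_\varepsilon(x)-G_\varepsilon(y)|\le M|x-y|^\alpha$ for all $x,y\in[0,1]$. *)

theory Defs
  imports Complex_Main
begin

text \<open>G_eps(x) = L * sum_{k=0}^{2^N-1} eps_{k+1} g(2^N x - k); the sign vector
  eps in {-1,1}^{2^N} is a function on indices 1..2^N.\<close>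
definition G_eps :: "real \<Rightarrow> nat \<Rightarrow> (real \<Rightarrow> real) \<Rightarrow> (nat \<Rightarrow> real) \<Rightarrow> real \<Rightarrow> real" where
  "G_eps L N g eps x = L * (\<Sum>k<2^N. eps (k+1) * g (2^N * x - real k))"

end

theory Submission
  imports Defs
begin

text \<open>The translates \<open>g (t - k)\<close> have disjoint supports, so the sum defining
  \<open>G\<^sub>\<epsilon> x\<close> is \<open>L h (2\<^sup>N x)\<close> with \<open>h t = \<pm>g (frac t)\<close> or \<open>0\<close>. As \<open>g\<close> vanishes at \<open>0\<close> and \<open>1\<close>,
  \<open>|g v| \<le> min v (1 - v)\<close>, so \<open>h\<close> is 1-Lipschitz with oscillation at most 1. Hence
  \<open>|G\<^sub>\<epsilon> x - G\<^sub>\<epsilon> y| \<le> L min 1 (2\<^sup>N |x - y|) \<le> L (2\<^sup>N |x - y|)\<^sup>\<alpha>\<close>, and the bound on \<open>L\<close>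
  gives \<open>L 2\<^sup>N\<^sup>\<alpha> \<le> 2\<^sup>\<alpha>\<^sup>-\<^sup>1 M \<le> M\<close>.\<close>

lemma lipschitz_vanishing_outside_endpoints:
  fixes g :: "real \<Rightarrow> real"
  assumes lip: "\<forall>x y. \<bar>g x - g y\<bar> \<le> \<bar>x - y\<bar>"
    and supp: "\<forall>x. x \<notin> {0..1} \<longrightarrow> g x = 0"
  shows "g 0 = 0" "g 1 = 0"
proof -
  have "\<bar>g 0\<bar> \<le> 0 + e" "\<bar>g 1\<bar> \<le> 0 + e" if "e > 0" for e
    using lip[rule_format, of 0 "-e"] lip[rule_format, of 1 "1 + e"]
      supp[rule_format, of "-e"] supp[rule_format, of "1 + e"] that by auto
  then show "g 0 = 0" "g 1 = 0"
    using field_le_epsilon[of "\<bar>g 0\<bar>" 0] field_le_epsilon[of "\<bar>g 1\<bar>" 0] by auto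
qed

lemma sum_translates_eq_floor_term:
  fixes g :: "real \<Rightarrow> real" and a :: "nat \<Rightarrow> real"
  assumes supp: "\<forall>x. x \<notin> {0..1} \<longrightarrow> g x = 0" and g1: "g 1 = 0"
  shows "(\<Sum>k<n. a k * g (t - real k)) =
    (if 0 \<le> \<lfloor>t\<rfloor> \<and> \<lfloor>t\<rfloor> < int n then a (nat \<lfloor>t\<rfloor>) else 0) * g (frac t)"
proof -
  have vanish: "g (t - real k) = 0" if "int k \<noteq> \<lfloor>t\<rfloor>" for k
  proof (cases "t - real k \<in> {0..1}")
    case True
    with that have "int k < \<lfloor>t\<rfloor>"
      by (metis atLeastAtMost_iff diff_ge_0_iff_ge le_floor_iff of_int_of_nat_eq order_le_neq_trans)
    then have "real k + 1 \<le> t"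
      by (metis le_floor_iff of_int_of_nat_eq of_int_add of_int_1 zless_imp_add1_zle)
    with True have "t - real k = 1" by auto
    then show ?thesis using g1 by simp
  next
    case False
    then show ?thesis using supp by blast
  qed
  show ?thesis
  proof (cases "0 \<le> \<lfloor>t\<rfloor>")
    case True
    then obtain j where j: "\<lfloor>t\<rfloor> = int j" by (metis nonneg_eq_int)
    have "(\<Sum>k<n. a k * g (t - real k)) = (\<Sum>k<n. if k = j then a j * g (frac t) else 0)"
      using vanish j by (intro sum.cong) (auto simp: frac_def)
    then show ?thesis using j by simp
  next
    case False
    then have "int k \<noteq> \<lfloor>t\<rfloor>" for k by linarith
    with False show ?thesis using vanish by simp
  qed
qed

lemma lipschitz_floor_weighted:
  fixes g :: "real \<Rightarrow> real" and c :: "int \<Rightarrow> real"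
  assumes lip: "\<forall>x y. \<bar>g x - g y\<bar> \<le> \<bar>x - y\<bar>" and g0: "g 0 = 0" and g1: "g 1 = 0"
    and c: "\<forall>j. \<bar>c j\<bar> \<le> 1"
  shows "\<bar>c \<lfloor>s\<rfloor> * g (frac s) - c \<lfloor>t\<rfloor> * g (frac t)\<bar> \<le> min 1 \<bar>s - t\<bar>"
proof -
  define \<phi> where "\<phi> u = c \<lfloor>u\<rfloor> * g (frac u)" for u
  have weighted: "\<bar>\<phi> u\<bar> \<le> \<bar>g (frac u)\<bar>" for u
    unfolding \<phi>_def using c mult_right_mono[of "\<bar>c \<lfloor>u\<rfloor>\<bar>" 1 "\<bar>g (frac u)\<bar>"] by (simp add: abs_mult)
  have frac: "0 \<le> frac u" "frac u < 1" for u :: real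
    by (simp_all add: frac_lt_1)
  have left: "\<bar>\<phi> u\<bar> \<le> frac u" and right: "\<bar>\<phi> u\<bar> \<le> 1 - frac u" for u
    using weighted[of u] frac[of u] lip[rule_format, of "frac u" 0] lip[rule_format, of "frac u" 1]
    by (simp_all add: g0 g1)
  have ordered: "\<bar>\<phi> s - \<phi> t\<bar> \<le> min 1 \<bar>s - t\<bar>" if "s \<le> t" for s t
  proof (cases "\<lfloor>s\<rfloor> = \<lfloor>t\<rfloor>")
    case True
    then have "\<bar>\<phi> s - \<phi> t\<bar> = \<bar>c \<lfloor>t\<rfloor>\<bar> * \<bar>g (frac s) - g (frac t)\<bar>"
      unfolding \<phi>_def by (metis abs_mult right_diff_distrib)
    also have "\<dots> \<le> \<bar>g (frac s) - g (frac t)\<bar>"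
      using c mult_right_mono[of "\<bar>c \<lfloor>t\<rfloor>\<bar>" 1] by simp
    also have "\<dots> \<le> \<bar>s - t\<bar>"
      using lip[rule_format, of "frac s" "frac t"] True by (simp add: frac_def)
    finally have "\<bar>\<phi> s - \<phi> t\<bar> \<le> \<bar>s - t\<bar>" .
    moreover have "\<bar>s - t\<bar> < 1"
      using True frac[of s] frac[of t] unfolding frac_def by linarith
    ultimately show ?thesis by (simp add: min_def)
  next
    case False
    with that have "\<lfloor>s\<rfloor> + 1 \<le> \<lfloor>t\<rfloor>" by (simp add: floor_mono order_le_neq_trans zless_imp_add1_zle)
    then have "real_of_int \<lfloor>s\<rfloor> + 1 \<le> real_of_int \<lfloor>t\<rfloor>" by (metis of_int_1 of_int_add of_int_le_iff)
    then have gap: "(1 - frac s) + frac t \<le> t - s" unfolding frac_def by linarith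
    have "\<bar>\<phi> s - \<phi> t\<bar> \<le> \<bar>\<phi> s\<bar> + \<bar>\<phi> t\<bar>" by (rule abs_triangle_ineq4)
    also have "\<dots> \<le> min 1 (t - s)"
      using left[of s] right[of s] left[of t] right[of t] gap by simp
    finally show ?thesis using that by simp
  qed
  show ?thesis
    using ordered[of s t] ordered[of t s] unfolding \<phi>_def
    by (cases "s \<le> t") (auto simp: abs_minus_commute)
qed

lemma min_one_le_powr:
  fixes s \<alpha> :: real
  assumes "0 \<le> s" "0 < \<alpha>" "\<alpha> \<le> 1"
  shows "min 1 s \<le> s powr \<alpha>"
proof (cases "s \<le> 1")
  case True
  then show ?thesis using assms powr_mono'[of \<alpha> 1 s] by simp
next
  case False
  then show ?thesis using assms ge_one_powr_ge_zero[of s \<alpha>] by simp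
qed

lemma holder_of_rescaled_lipschitz:
  fixes h :: "real \<Rightarrow> real" and L r \<alpha> :: real
  assumes h: "\<And>s t. \<bar>h s - h t\<bar> \<le> min 1 \<bar>s - t\<bar>"
    and \<alpha>: "0 < \<alpha>" "\<alpha> \<le> 1" and L: "0 \<le> L" and r: "0 < r"
  shows "\<bar>L * h (r * x) - L * h (r * y)\<bar> \<le> L * r powr \<alpha> * \<bar>x - y\<bar> powr \<alpha>"
proof -
  have "\<bar>L * h (r * x) - L * h (r * y)\<bar> = L * \<bar>h (r * x) - h (r * y)\<bar>"
    using L by (simp add: abs_mult right_diff_distrib[symmetric])
  also have "\<dots> \<le> L * min 1 (r * \<bar>x - y\<bar>)"
    using h[of "r * x" "r * y"] L r
    by (intro mult_left_mono) (auto simp: abs_mult right_diff_distrib[symmetric])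
  also have "\<dots> \<le> L * (r * \<bar>x - y\<bar>) powr \<alpha>"
    using L r \<alpha> by (intro mult_left_mono min_one_le_powr) auto
  finally show ?thesis
    using r by (simp add: powr_mult mult.assoc)
qed

lemma scaled_amplitude_bound:
  fixes N :: nat and L \<alpha> M :: real
  assumes "\<alpha> \<le> 1" "0 < M" and Lbound: "L \<le> 2 powr (- ((real N - 1) * \<alpha> + 1)) * M"
  shows "L * (2 ^ N) powr \<alpha> \<le> M"
proof -
  have "L * (2 ^ N) powr \<alpha> = L * 2 powr (real N * \<alpha>)"
    by (simp add: powr_realpow[symmetric] powr_powr)
  also have "\<dots> \<le> 2 powr (- ((real N - 1) * \<alpha> + 1)) * M * 2 powr (real N * \<alpha>)"
    using Lbound by (intro mult_right_mono) auto
  also have "\<dots> = M * 2 powr (\<alpha> - 1)"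
    by (simp add: powr_add[symmetric] algebra_simps)
  also have "\<dots> \<le> M * 2 powr 0"
    using assms by (intro mult_left_mono powr_mono) auto
  finally show ?thesis by simp
qed

theorem proposition8:
  fixes g :: "real \<Rightarrow> real" and N :: nat and L \<alpha> M :: real
  assumes lip: "\<forall>x y. \<bar>g x - g y\<bar> \<le> \<bar>x - y\<bar>"
    and supp: "\<forall>x. x \<notin> {0..1} \<longrightarrow> g x = 0"
    and N: "N > 0" and L: "L > 0" and \<alpha>: "0 < \<alpha>" "\<alpha> \<le> 1" and M: "M > 0"
    and Lbound: "L \<le> 2 powr (- ((real N - 1) * \<alpha> + 1)) * M"
  shows "\<forall>eps. (\<forall>i\<in>{1..2^N}. eps i \<in> {-1, 1::real}) \<longrightarrow>
           (\<forall>x\<in>{0..1}. \<forall>y\<in>{0..1}.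
              \<bar>G_eps L N g eps x - G_eps L N g eps y\<bar> \<le> M * \<bar>x - y\<bar> powr \<alpha>)"
proof (intro allI impI ballI)
  fix eps :: "nat \<Rightarrow> real" and x y :: real
  assume eps: "\<forall>i\<in>{1..2^N}. eps i \<in> {-1, 1::real}"
  define c where "c j = (if 0 \<le> j \<and> j < 2 ^ N then eps (nat j + 1) else 0)" for j :: int
  define h where "h t = c \<lfloor>t\<rfloor> * g (frac t)" for t
  note g01 = lipschitz_vanishing_outside_endpoints[OF lip supp]
  have G: "G_eps L N g eps t = L * h (2 ^ N * t)" for t
    unfolding G_eps_def h_def c_def sum_translates_eq_floor_term[OF supp g01(2)] by simp
  have "\<bar>c j\<bar> \<le> 1" for j
  proof (cases "0 \<le> j \<and> j < 2 ^ N")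
    case True
    then have "nat j + 1 \<in> {1..2 ^ N}" by (simp add: Suc_le_eq nat_less_iff)
    with eps have "eps (nat j + 1) \<in> {-1, 1}" by (rule bspec)
    then show ?thesis using True by (auto simp: c_def)
  qed (auto simp: c_def)
  then have "\<bar>h s - h t\<bar> \<le> min 1 \<bar>s - t\<bar>" for s t
    unfolding h_def using lipschitz_floor_weighted[OF lip g01] by blast
  then have "\<bar>G_eps L N g eps x - G_eps L N g eps y\<bar> \<le> L * (2 ^ N) powr \<alpha> * \<bar>x - y\<bar> powr \<alpha>"
    unfolding G using \<alpha> L by (intro holder_of_rescaled_lipschitz) auto
  also have "\<dots> \<le> M * \<bar>x - y\<bar> powr \<alpha>"
    using scaled_amplitude_bound[OF \<alpha>(2) M Lbound] by (intro mult_right_mono) auto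
  finally show "\<bar>G_eps L N g eps x - G_eps L N g eps y\<bar> \<le> M * \<bar>x - y\<bar> powr \<alpha>" .
qed

end
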